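(* Let $(f_t(x))_{t\in[0,1]}$ be a smooth family of strictly positive probability densities on $\mathbb R$, and suppose there exist a constant $v$ and a non-decreasing continuously differentiable function $\alpha:[0,1]\to\mathbb R$ such that, with $$g_t(x):=vf_t(x)+\alpha(t)\frac{\partial f_t}{\partial x}(x),$$ we have $\frac{\partial f_t}{\partial t}=-\frac{\partial g_t}{\partial x}$. Let $$h_t(x):=v^2f_t(x)+2v\alpha(t)\frac{\partial f_t}{\partial x}(x)+\alpha(t)^2\frac{\partial^2 f_t}{\partial x^2}(x)-\alpha'(t)f_t(x).$$ Assume the following technical conditions: (a) there exist integrable $\theta_A,\theta_B$ with $\left|\frac{\partial g_t}{\partial x}(1+\log f_t)\right|\le\theta_A(x)$ and $\left|\frac{\partial^2 h_t}{\partial x^2}\log f_t+\left(\frac{\partial g_t}{\partial x}\right)^2\frac1{f_t}\right|\le\theta_B(x)$ for all $t,x$; (b) for each $t$ the functions $g_t$, $\frac{\partial h_t}{\partial x}\log f_t$, $\frac{h_t}{f_t}\frac{\partial f_t}{\partial x}$, $\left(\frac{g_t}{f_t}\right)^2\frac{\partial f_t}{\partial x}$ vanish as $x\to\pm\infty$; and the entropy $H(t)=-\int f_t\log f_t\,dx$ exists for all $t$. Then $H$ is a concave function of $t$ on $[0,1]$. *)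

theory Defs
  imports "HOL-Analysis.Analysis"
begin

definition pdx :: "(real \<Rightarrow> real \<Rightarrow> real) \<Rightarrow> real \<Rightarrow> real \<Rightarrow> real" where
  "pdx u t x = deriv (\<lambda>y. u t y) x"

text \<open>Joint C-infinity smoothness of a two-variable function on a set S of the plane
  (derivatives taken within S): there is a family of functions containing u that is
  closed under taking both partial derivatives, each member being (Frechet)
  differentiable on S with the indicated partial derivatives.\<close>
definition smooth2_on :: "(real \<times> real) set \<Rightarrow> (real \<Rightarrow> real \<Rightarrow> real) \<Rightarrow> bool" where
  "smooth2_on S u \<longleftrightarrow>
     (\<exists>F. u \<in> F \<and>
        (\<forall>w\<in>F. \<exists>wt wx. wt \<in> F \<and> wx \<in> F \<and>
           (\<forall>p\<in>S. ((\<lambda>q. w (fst q) (snd q)) has_derivative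
                      (\<lambda>d. wt (fst p) (snd p) * fst d + wx (fst p) (snd p) * snd d))
                    (at p within S))))"

definition gfun :: "real \<Rightarrow> (real \<Rightarrow> real) \<Rightarrow> (real \<Rightarrow> real \<Rightarrow> real) \<Rightarrow> real \<Rightarrow> real \<Rightarrow> real" where
  "gfun v \<alpha> f t x = v * f t x + \<alpha> t * pdx f t x"

definition hfun :: "real \<Rightarrow> (real \<Rightarrow> real) \<Rightarrow> (real \<Rightarrow> real) \<Rightarrow> (real \<Rightarrow> real \<Rightarrow> real)
                     \<Rightarrow> real \<Rightarrow> real \<Rightarrow> real" where
  "hfun v \<alpha> \<alpha>' f t x = v\<^sup>2 * f t x + 2 * v * \<alpha> t * pdx f t x
                        + (\<alpha> t)\<^sup>2 * pdx (pdx f) t x - \<alpha>' t * f t x"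

definition entropy :: "(real \<Rightarrow> real \<Rightarrow> real) \<Rightarrow> real \<Rightarrow> real" where
  "entropy f t = - (LINT x|lborel. f t x * ln (f t x))"

definition vanishes_at_infinity :: "(real \<Rightarrow> real) \<Rightarrow> bool" where
  "vanishes_at_infinity u \<longleftrightarrow> (u \<longlongrightarrow> 0) at_top \<and> (u \<longlongrightarrow> 0) at_bot"

end

theory Submission
  imports Defs
begin

(* H'(t) = int g_x (1 + log f) dx, which equals int g_x log f dx because g vanishes at
   +/- infinity, and differentiating once more gives H''(t) = - int B dx with
   B = h_xx log f + g_x^2 / f. Pointwise B = Q_x + P, where
   P = 2 alpha^2 f ((log f)_xx)^2 + alpha' f_x^2 / f >= 0 because alpha is non-decreasing,
   and the flux Q tends to 0 along sequences x_n -> +/- infinity on which f_x -> 0; such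
   sequences exist since f_t is positive and integrable. Hence H'' <= 0. Both
   differentiations are done in integrated form, H(b) - H(a) = int_a^b H', the domination
   hypotheses justifying the exchange of the t- and x-integrals. *)

(* The two halves of smooth2_on (I x UNIV). Membership is only up to agreement on I x UNIV,
   where alone the partial derivatives of a member are determined. *)
definition partials_closed :: "real set \<Rightarrow> (real \<Rightarrow> real \<Rightarrow> real) set \<Rightarrow> bool" where
  "partials_closed I F \<longleftrightarrow> (\<forall>w\<in>F. \<exists>wt wx. wt \<in> F \<and> wx \<in> F \<and>
     (\<forall>p\<in>I \<times> UNIV. ((\<lambda>q. w (fst q) (snd q)) has_derivative
        (\<lambda>d. wt (fst p) (snd p) * fst d + wx (fst p) (snd p) * snd d)) (at p within I \<times> UNIV)))"

definition smooth_in ::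
    "real set \<Rightarrow> (real \<Rightarrow> real \<Rightarrow> real) set \<Rightarrow> (real \<Rightarrow> real \<Rightarrow> real) \<Rightarrow> bool" where
  "smooth_in I F u \<longleftrightarrow> (\<exists>w\<in>F. \<forall>t\<in>I. \<forall>x. u t x = w t x)"

lemma smooth2_onE:
  assumes "smooth2_on (I \<times> UNIV) u"
  obtains F where "partials_closed I F" "smooth_in I F u"
  using assms unfolding smooth2_on_def partials_closed_def smooth_in_def by blast

lemma smooth_inE:
  assumes "partials_closed I F" "smooth_in I F u"
  obtains wt wx w where "wt \<in> F" "wx \<in> F" "\<And>t x. t \<in> I \<Longrightarrow> u t x = w t x"
    "\<And>p. p \<in> I \<times> UNIV \<Longrightarrow> ((\<lambda>q. w (fst q) (snd q)) has_derivative
        (\<lambda>d. wt (fst p) (snd p) * fst d + wx (fst p) (snd p) * snd d)) (at p within I \<times> UNIV)"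
proof -
  from assms(2) obtain w where "w \<in> F" "\<And>t x. t \<in> I \<Longrightarrow> u t x = w t x"
    unfolding smooth_in_def by blast
  with assms(1) show ?thesis
    using that unfolding partials_closed_def by blast
qed

lemma smooth_in_pdx:
  assumes closed: "partials_closed I F" and u: "smooth_in I F u"
  shows "smooth_in I F (pdx u)"
    and "t \<in> I \<Longrightarrow> ((\<lambda>y. u t y) has_real_derivative pdx u t x) (at x)"
proof -
  obtain wt wx w where "wt \<in> F" "wx \<in> F" and agree: "\<And>t x. t \<in> I \<Longrightarrow> u t x = w t x" and
    D: "\<And>p. p \<in> I \<times> UNIV \<Longrightarrow> ((\<lambda>q. w (fst q) (snd q)) has_derivative
        (\<lambda>d. wt (fst p) (snd p) * fst d + wx (fst p) (snd p) * snd d)) (at p within I \<times> UNIV)"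
    using smooth_inE[OF closed u] by blast
  have wx: "((\<lambda>y. u t y) has_real_derivative wx t y) (at y)" if "t \<in> I" for t y
  proof -
    have "((\<lambda>y. (t, y)) has_derivative (\<lambda>d. (0, d))) (at y)"
      by (auto intro!: derivative_eq_intros)
    from has_derivative_in_compose2[OF D _ _ this]
    have "((\<lambda>y. w t y) has_derivative (\<lambda>d. wt t y * 0 + wx t y * d)) (at y)"
      using that by force
    then show ?thesis
      using agree[OF that] by (simp add: has_field_derivative_def mult.commute[of _ "wx t y"])
  qed
  have pdx_eq: "pdx u t y = wx t y" if "t \<in> I" for t y
    unfolding pdx_def using wx[OF that] by (rule DERIV_imp_deriv)
  show "smooth_in I F (pdx u)"
    unfolding smooth_in_def using \<open>wx \<in> F\<close> pdx_eq by blast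
  show "t \<in> I \<Longrightarrow> ((\<lambda>y. u t y) has_real_derivative pdx u t x) (at x)"
    using wx pdx_eq by simp
qed

lemma smooth_in_continuous_on:
  assumes "partials_closed I F" "smooth_in I F u"
  shows "continuous_on (I \<times> UNIV) (\<lambda>p. u (fst p) (snd p))"
proof -
  obtain wt wx w where "wt \<in> F" "wx \<in> F" and agree: "\<And>t x. t \<in> I \<Longrightarrow> u t x = w t x" and
    D: "\<And>p. p \<in> I \<times> UNIV \<Longrightarrow> ((\<lambda>q. w (fst q) (snd q)) has_derivative
        (\<lambda>d. wt (fst p) (snd p) * fst d + wx (fst p) (snd p) * snd d)) (at p within I \<times> UNIV)"
    using smooth_inE[OF assms] by blast
  have "continuous_on (I \<times> UNIV) (\<lambda>q. w (fst q) (snd q))"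
    by (rule has_derivative_continuous_on[OF D])
  then show ?thesis
    by (rule continuous_on_cong[THEN iffD1, rotated 2]) (auto simp: agree)
qed

lemma continuous_on_slice_fst:
  assumes "continuous_on (I \<times> UNIV) (\<lambda>p. c (fst p) (snd p))" "J \<subseteq> I"
  shows "continuous_on J (\<lambda>s. c s x)"
  by (rule continuous_on_compose2[OF assms(1), of _ "\<lambda>s. (s, x)", simplified])
     (use assms(2) in \<open>auto intro!: continuous_intros\<close>)

lemma continuous_on_slice_snd:
  assumes "continuous_on (I \<times> UNIV) (\<lambda>p. c (fst p) (snd p))" "t \<in> I"
  shows "continuous_on UNIV (\<lambda>y. c t y)"
  by (rule continuous_on_compose2[OF assms(1), of _ "\<lambda>y. (t, y)", simplified])
     (use assms(2) in \<open>auto intro!: continuous_intros\<close>)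

lemma continuous_on_swap_subset:
  assumes "continuous_on (I \<times> UNIV) (\<lambda>p. c (fst p) (snd p))" "J \<subseteq> I"
  shows "continuous_on (UNIV \<times> J) (\<lambda>(y, s). c s y)"
  unfolding case_prod_beta
  by (rule continuous_on_compose2[OF assms(1), of _ "\<lambda>q. (snd q, fst q)", simplified])
     (use assms(2) in \<open>auto intro!: continuous_intros\<close>)

lemma has_integral_derivative_within:
  assumes "\<And>t. t \<in> S \<Longrightarrow> (u has_real_derivative u' t) (at t within S)"
    and "{a..b} \<subseteq> S" "a \<le> b"
  shows "(u' has_integral (u b - u a)) {a..b}"
proof (rule fundamental_theorem_of_calculus[OF assms(3)])
  fix s assume "s \<in> {a..b}"
  with assms(1,2) have "(u has_real_derivative u' s) (at s within {a..b})"
    by (blast intro: has_field_derivative_subset)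
  then show "(u has_vector_derivative u' s) (at s within {a..b})"
    by (simp add: has_real_derivative_iff_has_vector_derivative)
qed

(* Write u(t,y) = u(c,y) + int_c^t w(s,y) ds and differentiate under the integral sign in y. *)
lemma has_real_derivative_pdx_param:
  assumes closed: "partials_closed {c..d} F" and u: "smooth_in {c..d} F u"
    and ut: "\<And>t x. t \<in> {c..d} \<Longrightarrow> ((\<lambda>s. u s x) has_real_derivative w t x) (at t within {c..d})"
    and wx: "\<And>t y. t \<in> {c..d} \<Longrightarrow> ((\<lambda>y. w t y) has_real_derivative w' t y) (at y)"
    and cw: "continuous_on ({c..d} \<times> UNIV) (\<lambda>p. w (fst p) (snd p))"
    and cw': "continuous_on ({c..d} \<times> UNIV) (\<lambda>p. w' (fst p) (snd p))"
    and t: "t \<in> {c..d}"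
  shows "((\<lambda>s. pdx u s x) has_real_derivative w' t x) (at t within {c..d})"
proof -
  have pdx_eq: "pdx u t y = pdx u c y + integral {c..t} (\<lambda>s. w' s y)" if t: "t \<in> {c..d}" for t y
  proof -
    have "integral {c..t} (\<lambda>s. w s z) = u t z - u c z" for z
      by (rule integral_unique, rule has_integral_derivative_within[OF ut]) (use t in auto)
    then have u_eq: "(\<lambda>z. u t z) = (\<lambda>z. u c z + integral {c..t} (\<lambda>s. w s z))"
      by simp
    have "((\<lambda>z. integral (cbox c t) (\<lambda>s. w s z)) has_real_derivative
             integral (cbox c t) (\<lambda>s. w' s y)) (at y within UNIV)"
    proof (rule leibniz_rule_field_derivative)
      show "((\<lambda>z. w s z) has_real_derivative w' s z) (at z within UNIV)" if "s \<in> cbox c t" for z s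
        using wx that t by auto
      show "(\<lambda>s. w s z) integrable_on cbox c t" for z
        using continuous_on_slice_fst[OF cw, of "{c..t}"] t
        by (simp add: integrable_continuous_interval)
      show "continuous_on (UNIV \<times> cbox c t) (\<lambda>(z, s). w' s z)"
        using continuous_on_swap_subset[OF cw', of "{c..t}"] t by simp
    qed auto
    then have "((\<lambda>z. integral {c..t} (\<lambda>s. w s z)) has_real_derivative
             integral {c..t} (\<lambda>s. w' s y)) (at y)"
      by (simp add: cbox_interval)
    from DERIV_add[OF smooth_in_pdx(2)[OF closed u] this] t
    have "((\<lambda>z. u t z) has_real_derivative pdx u c y + integral {c..t} (\<lambda>s. w' s y)) (at y)"
      unfolding u_eq by simp
    with smooth_in_pdx(2)[OF closed u t] show ?thesis
      by (rule DERIV_unique)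
  qed
  have "((\<lambda>s. pdx u c x + integral {c..s} (\<lambda>r. w' r x)) has_real_derivative w' t x)
          (at t within {c..d})"
    using DERIV_add[OF DERIV_const integral_has_real_derivative[OF continuous_on_slice_fst[OF cw'] t]]
    by simp
  then show ?thesis
    by (rule has_field_derivative_transform_within[OF _ zero_less_one t]) (metis pdx_eq)
qed

lemma integral_interval_eq_lborel:
  fixes u :: "real \<Rightarrow> real"
  assumes "integrable lborel u"
  shows "integral {a..b} u = (LINT x|lborel. indicator {a..b} x * u x)"
proof -
  have "set_integrable lborel {a..b} u"
    unfolding set_integrable_def by (rule integrable_mult_indicator) (auto simp: assms)
  from set_borel_integral_eq_integral(2)[OF this] show ?thesis
    by (simp add: set_lebesgue_integral_def)
qed

lemma integrable_on_interval_lborel: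
  fixes u :: "real \<Rightarrow> real"
  assumes "integrable lborel u"
  shows "u integrable_on {a..b}"
proof (rule set_borel_integral_eq_integral(1))
  show "set_integrable lborel {a..b} u"
    unfolding set_integrable_def by (rule integrable_mult_indicator) (auto simp: assms)
qed

lemma abs_integral_interval_le:
  fixes u :: "real \<Rightarrow> real"
  assumes u: "integrable lborel u" and \<theta>: "integrable lborel \<theta>" and bound: "\<And>x. \<bar>u x\<bar> \<le> \<theta> x"
  shows "\<bar>integral {a..b} u\<bar> \<le> (LINT x|lborel. \<theta> x)"
proof -
  have "integrable lborel (\<lambda>x. indicator {a..b} x * u x)"
    using integrable_mult_indicator[OF _ u, of "{a..b}"] by simp
  then have "\<bar>LINT x|lborel. indicator {a..b} x * u x\<bar> \<le> (LINT x|lborel. \<theta> x)"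
    using \<theta> bound by (intro integral_abs_bound_integral) (auto split: split_indicator intro: order_trans[OF _ bound])
  then show ?thesis
    by (simp add: integral_interval_eq_lborel[OF u])
qed

lemma tendsto_integral_interval_lborel:
  fixes u :: "real \<Rightarrow> real"
  assumes u: "integrable lborel u"
    and l: "filterlim l at_bot sequentially" and r: "filterlim r at_top sequentially"
  shows "(\<lambda>n. integral {l n..r n} u) \<longlonglongrightarrow> (LINT x|lborel. u x)"
proof -
  have "(\<lambda>n. LINT x|lborel. indicator {l n..r n} x * u x) \<longlonglongrightarrow> (LINT x|lborel. u x)"
  proof (rule integral_dominated_convergence[where w="\<lambda>x. norm (u x)"])
    show "AE x in lborel. (\<lambda>n. indicator {l n..r n} x * u x) \<longlonglongrightarrow> u x"
    proof (rule always_eventually, intro allI tendsto_eventually)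
      fix x
      have "eventually (\<lambda>n. l n \<le> x \<and> x \<le> r n) sequentially"
        using l r by (simp add: filterlim_at_bot filterlim_at_top eventually_conj)
      then show "eventually (\<lambda>n. indicator {l n..r n} x * u x = u x) sequentially"
        by eventually_elim auto
    qed
  qed (use u in \<open>auto split: split_indicator\<close>)
  then show ?thesis
    by (simp add: integral_interval_eq_lborel[OF u])
qed

lemma tendsto_integral_symmetric_interval_lborel:
  fixes u :: "real \<Rightarrow> real"
  assumes "integrable lborel u"
  shows "(\<lambda>n. integral {- real n..real n} u) \<longlonglongrightarrow> (LINT x|lborel. u x)"
  by (rule tendsto_integral_interval_lborel[OF assms])
     (auto simp: filterlim_uminus_at_bot intro: filterlim_real_sequentially)

lemma integrable_lborel_dominated_continuous:
  fixes u :: "real \<Rightarrow> real"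
  assumes "continuous_on UNIV u" "integrable lborel \<theta>" "\<And>x. \<bar>u x\<bar> \<le> \<theta> x"
  shows "integrable lborel u"
proof (rule Bochner_Integration.integrable_bound[OF assms(2)])
  show "u \<in> borel_measurable lborel"
    using borel_measurable_continuous_onI[OF assms(1)] by simp
  show "AE x in lborel. norm (u x) \<le> norm (\<theta> x)"
    using assms(3) by (auto intro!: always_eventually order_trans[OF _ abs_ge_self])
qed

lemma integrable_lborel_interval_integral:
  fixes G :: "real \<Rightarrow> real \<Rightarrow> real"
  assumes cont: "continuous_on (I \<times> UNIV) (\<lambda>p. G (fst p) (snd p))"
    and \<theta>: "integrable lborel \<theta>" and bound: "\<And>s x. s \<in> I \<Longrightarrow> \<bar>G s x\<bar> \<le> \<theta> x"
    and sub: "{a..b} \<subseteq> I" and "a \<le> b"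
  shows "integrable lborel (\<lambda>x. integral {a..b} (\<lambda>s. G s x))"
proof (rule integrable_lborel_dominated_continuous)
  show "continuous_on UNIV (\<lambda>x. integral {a..b} (\<lambda>s. G s x))"
    using integral_continuous_on_param[of UNIV a b "\<lambda>x s. G s x"] continuous_on_swap_subset[OF cont sub]
    by (simp add: cbox_interval)
  show "integrable lborel (\<lambda>x. (b - a) * \<theta> x)"
    using \<theta> by simp
  show "\<bar>integral {a..b} (\<lambda>s. G s x)\<bar> \<le> (b - a) * \<theta> x" for x
  proof -
    have "(\<lambda>s. G s x) integrable_on {a..b}"
      using continuous_on_slice_fst[OF cont sub] by (rule integrable_continuous_interval)
    moreover have "norm (G s x) \<le> \<theta> x" if "s \<in> {a..b}" for s
      using bound sub that by auto
    ultimately show ?thesis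
      using integral_norm_bound_integral[OF _ integrable_const_ivl, of "\<lambda>s. G s x" a b "\<theta> x"]
        \<open>a \<le> b\<close> by simp
  qed
qed

(* Fubini on [a,b] x R: truncate the line integral to [-n,n], where the two Riemann
   integrals commute, and pass to the limit by dominated convergence. *)
lemma lborel_integral_interval_swap:
  fixes G :: "real \<Rightarrow> real \<Rightarrow> real"
  assumes cont: "continuous_on (I \<times> UNIV) (\<lambda>p. G (fst p) (snd p))"
    and \<theta>: "integrable lborel \<theta>" and bound: "\<And>s x. s \<in> I \<Longrightarrow> \<bar>G s x\<bar> \<le> \<theta> x"
    and sub: "{a..b} \<subseteq> I" and "a \<le> b"
  shows "(\<lambda>s. LINT x|lborel. G s x) integrable_on {a..b}"
    and "(LINT x|lborel. integral {a..b} (\<lambda>s. G s x)) = integral {a..b} (\<lambda>s. LINT x|lborel. G s x)"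
proof -
  have G_int: "integrable lborel (G s)" if "s \<in> I" for s
    by (rule integrable_lborel_dominated_continuous[OF continuous_on_slice_snd[OF cont that] \<theta>])
       (rule bound[OF that])
  have swap: "integral {-real n..real n} (\<lambda>x. integral {a..b} (\<lambda>s. G s x))
      = integral {a..b} (\<lambda>s. integral {-real n..real n} (G s))" for n :: nat
  proof -
    have "continuous_on (cbox (-real n, a) (real n, b)) (\<lambda>(x, s). G s x)"
      by (rule continuous_on_subset[OF continuous_on_swap_subset[OF cont sub]]) (auto simp: cbox_Pair_eq)
    from integral_swap_continuous[OF this] show ?thesis
      by (simp add: cbox_interval)
  qed
  have trunc_int: "(\<lambda>s. integral {-real n..real n} (G s)) integrable_on {a..b}" for n :: nat
  proof -
    have "continuous_on ({a..b} \<times> UNIV) (\<lambda>(s, y). G s y)"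
      using continuous_on_subset[OF cont, of "{a..b} \<times> UNIV"] sub by (auto simp: case_prod_beta)
    then have "continuous_on {a..b} (\<lambda>s. integral (cbox (-real n) (real n)) (G s))"
      by (intro integral_continuous_on_param) (rule continuous_on_subset, auto)
    then show ?thesis
      by (simp add: cbox_interval integrable_continuous_interval)
  qed
  have trunc_le: "norm (integral {-real n..real n} (G s)) \<le> (LINT x|lborel. \<theta> x)"
    if "s \<in> {a..b}" for n :: nat and s
  proof -
    have "s \<in> I"
      using that sub by auto
    from abs_integral_interval_le[OF G_int[OF this] \<theta> bound[OF this]] show ?thesis
      by simp
  qed
  have trunc_lim: "(\<lambda>n. integral {-real n..real n} (G s)) \<longlonglongrightarrow> (LINT x|lborel. G s x)"
    if "s \<in> {a..b}" for s
    using tendsto_integral_symmetric_interval_lborel[OF G_int] that sub by blast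
  note dominated = dominated_convergence[OF trunc_int integrable_const_ivl trunc_le trunc_lim]
  show "(\<lambda>s. LINT x|lborel. G s x) integrable_on {a..b}"
    by (rule dominated(1))
  show "(LINT x|lborel. integral {a..b} (\<lambda>s. G s x)) = integral {a..b} (\<lambda>s. LINT x|lborel. G s x)"
    using tendsto_integral_symmetric_interval_lborel[OF
        integrable_lborel_interval_integral[OF cont \<theta> bound sub \<open>a \<le> b\<close>]] dominated(2)
    unfolding swap by (rule LIMSEQ_unique)
qed

lemma continuous_on_abs_ge_sign:
  fixes \<phi> :: "real \<Rightarrow> real"
  assumes cont: "continuous_on {c..} \<phi>" and big: "\<And>y. y \<ge> c \<Longrightarrow> e \<le> \<bar>\<phi> y\<bar>" and "e > 0"
  shows "(\<forall>y \<ge> c. e \<le> \<phi> y) \<or> (\<forall>y \<ge> c. \<phi> y \<le> - e)"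
proof (rule ccontr)
  assume "\<not> ?thesis"
  then obtain y1 y2 where y1: "y1 \<ge> c" "\<phi> y1 < e" and y2: "y2 \<ge> c" "\<phi> y2 > - e"
    by force
  have "\<phi> y1 \<le> - e" "e \<le> \<phi> y2"
    using big[OF y1(1)] big[OF y2(1)] y1(2) y2(2) by (auto simp: abs_if split: if_splits)
  have sub: "continuous_on {min y1 y2..max y1 y2} \<phi>"
    by (rule continuous_on_subset[OF cont]) (use y1 y2 in auto)
  have "\<exists>z. min y1 y2 \<le> z \<and> z \<le> max y1 y2 \<and> \<phi> z = 0"
  proof (cases "y1 \<le> y2")
    case True
    then show ?thesis
      using IVT'[of \<phi> y1 0 y2] sub \<open>\<phi> y1 \<le> - e\<close> \<open>e \<le> \<phi> y2\<close> \<open>e > 0\<close> by simp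
  next
    case False
    then show ?thesis
      using IVT2'[of \<phi> y1 0 y2] sub \<open>\<phi> y1 \<le> - e\<close> \<open>e \<le> \<phi> y2\<close> \<open>e > 0\<close> by simp
  qed
  then obtain z where "z \<ge> c" "\<phi> z = 0"
    using y1 y2 by (meson min.boundedI order_trans)
  with big[of z] \<open>e > 0\<close> show False
    by simp
qed

lemma not_integrable_if_deriv_ge:
  fixes \<psi> :: "real \<Rightarrow> real"
  assumes deriv: "\<And>y. (\<psi> has_real_derivative \<phi> y) (at y)" and nonneg: "\<And>y. \<psi> y \<ge> 0"
    and ge: "\<And>y. y \<ge> c \<Longrightarrow> e \<le> \<phi> y" and "e > 0"
  shows "\<not> integrable lborel \<psi>"
proof
  assume int: "integrable lborel \<psi>"
  have linear: "e * (y - c) \<le> \<psi> y" if "y \<ge> c" for y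
  proof -
    have "\<psi> c - e * c \<le> \<psi> y - e * y"
    proof (rule DERIV_nonneg_imp_nondecreasing[where f="\<lambda>x. \<psi> x - e * x", OF that])
      fix x assume "c \<le> x"
      then show "\<exists>D. ((\<lambda>x. \<psi> x - e * x) has_real_derivative D) (at x) \<and> 0 \<le> D"
        using ge[of x] by (intro exI[of _ "\<phi> x - e"]) (auto intro!: derivative_eq_intros deriv)
    qed
    with nonneg[of c] show ?thesis
      by (simp add: algebra_simps)
  qed
  define K where "K = (LINT x|lborel. \<psi> x) + 1"
  define M where "M = c + 1 / e"
  have "K > 0"
    using nonneg by (simp add: K_def add_nonneg_pos integral_nonneg_AE)
  have "K = integral {M..M+K} (\<lambda>_. 1::real)"
    using \<open>K > 0\<close> by simp
  also have "\<dots> \<le> integral {M..M+K} \<psi>"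
  proof (rule integral_le)
    have "continuous_on UNIV \<psi>"
      using deriv by (intro DERIV_continuous_on) auto
    then show "\<psi> integrable_on {M..M + K}"
      by (simp add: continuous_on_subset integrable_continuous_interval)
    show "1 \<le> \<psi> y" if y: "y \<in> {M..M+K}" for y
    proof -
      have "M \<ge> c"
        using \<open>e > 0\<close> by (simp add: M_def)
      have "1 = e * (M - c)"
        using \<open>e > 0\<close> by (simp add: M_def)
      also have "\<dots> \<le> e * (y - c)"
        using y \<open>e > 0\<close> by (intro mult_left_mono) auto
      also have "\<dots> \<le> \<psi> y"
        using y \<open>M \<ge> c\<close> by (intro linear) simp
      finally show ?thesis .
    qed
  qed auto
  also have "\<dots> = (LINT x|lborel. indicator {M..M+K} x * \<psi> x)"
    by (rule integral_interval_eq_lborel[OF int])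
  also have "\<dots> \<le> (LINT x|lborel. \<psi> x)"
    using integrable_mult_indicator[OF _ int, of "{M..M+K}"] int nonneg
    by (intro integral_mono) (auto split: split_indicator)
  finally show False
    by (simp add: K_def)
qed

lemma not_pos_if_deriv_le:
  fixes \<psi> :: "real \<Rightarrow> real"
  assumes deriv: "\<And>y. (\<psi> has_real_derivative \<phi> y) (at y)"
    and le: "\<And>y. y \<ge> c \<Longrightarrow> \<phi> y \<le> - e" and "e > 0"
  shows "\<exists>y \<ge> c. \<psi> y \<le> 0"
proof -
  define y where "y = c + \<bar>\<psi> c\<bar> / e"
  have "y \<ge> c"
    using \<open>e > 0\<close> by (simp add: y_def)
  then have "\<psi> y + e * y \<le> \<psi> c + e * c"
  proof (rule DERIV_nonpos_imp_nonincreasing[where f="\<lambda>x. \<psi> x + e * x"])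
    fix x assume "c \<le> x"
    then show "\<exists>D. ((\<lambda>x. \<psi> x + e * x) has_real_derivative D) (at x) \<and> D \<le> 0"
      using le[of x] by (intro exI[of _ "\<phi> x + e"]) (auto intro!: derivative_eq_intros deriv)
  qed
  moreover have "e * y = e * c + \<bar>\<psi> c\<bar>"
    using \<open>e > 0\<close> by (simp add: y_def distrib_left)
  ultimately have "\<psi> y \<le> \<psi> c - \<bar>\<psi> c\<bar>"
    by simp
  with \<open>y \<ge> c\<close> show ?thesis
    by (intro exI[of _ y]) auto
qed

lemma integrable_pos_deriv_zero_seq_at_top:
  fixes \<psi> \<phi> :: "real \<Rightarrow> real"
  assumes deriv: "\<And>y. (\<psi> has_real_derivative \<phi> y) (at y)" and cont: "continuous_on UNIV \<phi>"
    and pos: "\<And>y. \<psi> y > 0" and int: "integrable lborel \<psi>"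
  obtains r where "filterlim r at_top sequentially" "(\<lambda>n. \<phi> (r n)) \<longlonglongrightarrow> 0"
proof -
  have "\<exists>y \<ge> real n. \<bar>\<phi> y\<bar> < 1 / Suc n" for n
  proof (rule ccontr)
    define e :: real where "e = 1 / Suc n"
    assume "\<not> ?thesis"
    then have big: "e \<le> \<bar>\<phi> y\<bar>" if "y \<ge> real n" for y
      using that by (auto simp: e_def not_less)
    have "e > 0"
      by (simp add: e_def)
    have "continuous_on {real n..} \<phi>"
      by (rule continuous_on_subset[OF cont]) simp
    then have "(\<forall>y \<ge> real n. e \<le> \<phi> y) \<or> (\<forall>y \<ge> real n. \<phi> y \<le> - e)"
      by (rule continuous_on_abs_ge_sign) (use big \<open>e > 0\<close> in auto)
    then show False
    proof (elim disjE)
      assume "\<forall>y \<ge> real n. e \<le> \<phi> y"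
      then have "\<not> integrable lborel \<psi>"
        by (intro not_integrable_if_deriv_ge[OF deriv less_imp_le[OF pos] _ \<open>e > 0\<close>]) auto
      with int show False
        by simp
    next
      assume "\<forall>y \<ge> real n. \<phi> y \<le> - e"
      then obtain y where "\<psi> y \<le> 0"
        using not_pos_if_deriv_le[OF deriv _ \<open>e > 0\<close>] by blast
      with pos[of y] show False
        by simp
    qed
  qed
  then obtain r where r: "\<And>n. r n \<ge> real n" "\<And>n. \<bar>\<phi> (r n)\<bar> < 1 / Suc n"
    by metis
  have "filterlim r at_top sequentially"
    by (rule filterlim_at_top_mono[OF filterlim_real_sequentially]) (use r in auto)
  moreover have "(\<lambda>n. \<phi> (r n)) \<longlonglongrightarrow> 0"
    by (rule LIMSEQ_norm_0) (use r in auto)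
  ultimately show ?thesis
    using that by blast
qed

lemma integrable_pos_deriv_zero_seq_at_bot:
  fixes \<psi> \<phi> :: "real \<Rightarrow> real"
  assumes deriv: "\<And>y. (\<psi> has_real_derivative \<phi> y) (at y)" and cont: "continuous_on UNIV \<phi>"
    and pos: "\<And>y. \<psi> y > 0" and int: "integrable lborel \<psi>"
  obtains l where "filterlim l at_bot sequentially" "(\<lambda>n. \<phi> (l n)) \<longlonglongrightarrow> 0"
proof -
  obtain r where r: "filterlim r at_top sequentially" "(\<lambda>n. - \<phi> (- r n)) \<longlonglongrightarrow> 0"
  proof (rule integrable_pos_deriv_zero_seq_at_top[where \<psi>="\<lambda>y. \<psi> (- y)"])
    show "((\<lambda>y. \<psi> (- y)) has_real_derivative - \<phi> (- y)) (at y)" for y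
      using DERIV_chain2[OF deriv DERIV_minus[OF DERIV_ident], of y] by simp
    show "continuous_on UNIV (\<lambda>y. - \<phi> (- y))"
      by (intro continuous_intros continuous_on_compose2[OF cont]) auto
    show "integrable lborel (\<lambda>y. \<psi> (- y))"
      using lborel_integrable_real_affine[OF int, of "-1" 0] by simp
  qed (use pos in auto)
  have "filterlim (\<lambda>n. - r n) at_bot sequentially"
    using r(1) by (simp add: filterlim_uminus_at_bot)
  moreover have "(\<lambda>n. \<phi> (- r n)) \<longlonglongrightarrow> 0"
    using tendsto_minus[OF r(2)] by simp
  ultimately show ?thesis
    using that by blast
qed

lemma mono_on_Icc_deriv_nonneg:
  fixes g :: "real \<Rightarrow> real"
  assumes mono: "mono_on {a..b} g" and deriv: "(g has_real_derivative D) (at t within {a..b})"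
    and t: "t \<in> {a..b}" and "a < b"
  shows "D \<ge> 0"
proof (rule tendsto_lowerbound)
  show "((\<lambda>y. (g y - g t) / (y - t)) \<longlongrightarrow> D) (at t within {a..b})"
    using deriv by (simp add: has_field_derivative_iff)
  show "\<forall>\<^sub>F y in at t within {a..b}. (g y - g t) / (y - t) \<ge> 0"
    unfolding eventually_at_filter
  proof (intro always_eventually allI impI)
    fix y assume y: "y \<noteq> t" "y \<in> {a..b}"
    show "(g y - g t) / (y - t) \<ge> 0"
    proof (cases "y < t")
      case True
      with mono_onD[OF mono] y t show ?thesis
        by (intro divide_nonpos_neg) auto
    next
      case False
      with mono_onD[OF mono] y t show ?thesis
        by (intro divide_nonneg_pos) auto
    qed
  qed
  show "at t within {a..b} \<noteq> bot"
    using t \<open>a < b\<close> by (simp add: trivial_limit_within islimpt_Icc)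
qed

lemma concave_on_Icc_integral_antimono:
  fixes H D :: "real \<Rightarrow> real"
  assumes int: "\<And>a b. c \<le> a \<Longrightarrow> a \<le> b \<Longrightarrow> b \<le> d \<Longrightarrow>
      D integrable_on {a..b} \<and> H b - H a = integral {a..b} D"
    and antimono: "\<And>a b. c \<le> a \<Longrightarrow> a \<le> b \<Longrightarrow> b \<le> d \<Longrightarrow> D b \<le> D a"
  shows "concave_on {c..d} H"
proof (rule concave_on_linorderI)
  show "convex {c..d}"
    by (simp add: convex_real_interval)
next
  fix t x y :: real
  assume t: "0 < t" "t < 1" and xy: "x \<in> {c..d}" "y \<in> {c..d}" "x < y"
  define z where "z = (1 - t) * x + t * y"
  have zx: "z - x = t * (y - x)" and yz: "y - z = (1 - t) * (y - x)"
    by (simp_all add: z_def algebra_simps)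
  then have xz: "x \<le> z" and zy: "z \<le> y"
    using t xy by (metis diff_ge_0_iff_ge less_eq_real_def mult_nonneg_nonneg)+
  have left: "(z - x) * D z \<le> H z - H x"
  proof -
    from int[of x z] xy xz zy have "D integrable_on {x..z}" "H z - H x = integral {x..z} D"
      by auto
    moreover have "integral {x..z} (\<lambda>_. D z) \<le> integral {x..z} D"
      by (rule integral_le[OF _ \<open>D integrable_on {x..z}\<close>]) (use antimono xy xz zy in auto)
    ultimately show ?thesis
      using xz by simp
  qed
  have right: "H y - H z \<le> (y - z) * D z"
  proof -
    from int[of z y] xy xz zy have "D integrable_on {z..y}" "H y - H z = integral {z..y} D"
      by auto
    moreover have "integral {z..y} D \<le> integral {z..y} (\<lambda>_. D z)"
      by (rule integral_le[OF \<open>D integrable_on {z..y}\<close>]) (use antimono xy xz zy in auto)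
    ultimately show ?thesis
      using zy by simp
  qed
  have "(1 - t) * (t * (y - x) * D z) \<le> (1 - t) * (H z - H x)"
    using left zx t by (intro mult_left_mono) auto
  moreover have "t * (H y - H z) \<le> t * ((1 - t) * (y - x) * D z)"
    using right yz t by (intro mult_left_mono) auto
  ultimately have "(1 - t) * H x + t * H y \<le> H z"
    by (simp add: algebra_simps)
  then show "(1 - t) * H x + t * H y \<le> H ((1 - t) *\<^sub>R x + t *\<^sub>R y)"
    by (simp add: z_def)
qed

lemma integral_lborel_deriv_vanishing:
  fixes u u' :: "real \<Rightarrow> real"
  assumes deriv: "\<And>x. (u has_real_derivative u' x) (at x)"
    and int: "integrable lborel u'" and van: "vanishes_at_infinity u"
  shows "(LINT x|lborel. u' x) = 0"
proof -
  have "integral {- real n..real n} u' = u (real n) - u (- real n)" for n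
    by (rule integral_unique, rule has_integral_derivative_within[where S=UNIV])
       (auto intro: has_field_derivative_at_within deriv)
  moreover have "(\<lambda>n. u (real n)) \<longlonglongrightarrow> 0"
    using van filterlim_real_sequentially unfolding vanishes_at_infinity_def
    by (auto intro: filterlim_compose)
  moreover have "(\<lambda>n. u (- real n)) \<longlonglongrightarrow> 0"
    using van filterlim_real_sequentially unfolding vanishes_at_infinity_def
    by (auto intro: filterlim_compose simp: filterlim_uminus_at_bot)
  ultimately have "(\<lambda>n. integral {- real n..real n} u') \<longlonglongrightarrow> 0 - 0"
    by (simp only:) (rule tendsto_diff)
  then show ?thesis
    using LIMSEQ_unique[OF tendsto_integral_symmetric_interval_lborel[OF int]] by simp
qed

lemma integral_lborel_nonneg_flux:
  fixes b p Q :: "real \<Rightarrow> real"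
  assumes int: "integrable lborel b"
    and deriv: "\<And>y. (Q has_real_derivative b y - p y) (at y)" and p: "\<And>y. p y \<ge> 0"
    and l: "filterlim l at_bot sequentially" and r: "filterlim r at_top sequentially"
    and flux: "(\<lambda>n. Q (r n) - Q (l n)) \<longlonglongrightarrow> 0"
  shows "0 \<le> (LINT y|lborel. b y)"
proof (rule tendsto_le[OF trivial_limit_sequentially
      tendsto_integral_interval_lborel[OF int l r] flux])
  have "eventually (\<lambda>n. l n \<le> 0 \<and> 0 \<le> r n) sequentially"
    using l r by (simp add: filterlim_at_bot filterlim_at_top eventually_conj)
  then show "\<forall>\<^sub>F n in sequentially. Q (r n) - Q (l n) \<le> integral {l n..r n} b"
  proof eventually_elim
    case (elim n)
    have ftc: "((\<lambda>y. b y - p y) has_integral (Q (r n) - Q (l n))) {l n..r n}"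
      using elim by (intro has_integral_derivative_within[where S=UNIV])
        (auto intro: has_field_derivative_at_within deriv)
    have b_int: "b integrable_on {l n..r n}"
      by (rule integrable_on_interval_lborel[OF int])
    then have "p integrable_on {l n..r n}"
      using integrable_diff[OF b_int has_integral_integrable[OF ftc]] by simp
    then have "0 \<le> integral {l n..r n} p"
      using p by (intro integral_nonneg) auto
    moreover have "integral {l n..r n} b = (Q (r n) - Q (l n)) + integral {l n..r n} p"
      using integral_diff[OF b_int \<open>p integrable_on {l n..r n}\<close>] integral_unique[OF ftc] by simp
    ultimately show ?case
      by simp
  qed
qed

lemma pdx_eqI:
  assumes "((\<lambda>y. u t y) has_real_derivative D) (at x)"
  shows "pdx u t x = D"
  unfolding pdx_def using assms by (rule DERIV_imp_deriv)

locale entropy_flow =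
  fixes F :: "(real \<Rightarrow> real \<Rightarrow> real) set" and f :: "real \<Rightarrow> real \<Rightarrow> real"
    and v :: real and \<alpha> \<alpha>' \<theta>A \<theta>B :: "real \<Rightarrow> real"
  assumes closed: "partials_closed {0..1} F" and f_smooth: "smooth_in {0..1} F f"
    and pos: "\<And>t x. t \<in> {0..1} \<Longrightarrow> f t x > 0"
    and dens_int: "\<And>t. t \<in> {0..1} \<Longrightarrow> integrable lborel (\<lambda>x. f t x)"
    and alpha_mono: "mono_on {0..1} \<alpha>"
    and alpha_deriv: "\<And>t. t \<in> {0..1} \<Longrightarrow> (\<alpha> has_real_derivative \<alpha>' t) (at t within {0..1})"
    and alpha_C1: "continuous_on {0..1} \<alpha>'"
    and transport: "\<And>t x. t \<in> {0..1} \<Longrightarrow>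
          ((\<lambda>s. f s x) has_real_derivative - pdx (gfun v \<alpha> f) t x) (at t within {0..1})"
    and thA_int: "integrable lborel \<theta>A"
    and thB_int: "integrable lborel \<theta>B"
    and boundA: "\<And>t x. t \<in> {0..1} \<Longrightarrow>
          \<bar>pdx (gfun v \<alpha> f) t x * (1 + ln (f t x))\<bar> \<le> \<theta>A x"
    and boundB: "\<And>t x. t \<in> {0..1} \<Longrightarrow>
          \<bar>pdx (pdx (hfun v \<alpha> \<alpha>' f)) t x * ln (f t x)
             + (pdx (gfun v \<alpha> f) t x)\<^sup>2 / f t x\<bar> \<le> \<theta>B x"
    and van_g: "\<And>t. t \<in> {0..1} \<Longrightarrow> vanishes_at_infinity (\<lambda>x. gfun v \<alpha> f t x)"
    and van_h: "\<And>t. t \<in> {0..1} \<Longrightarrow>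
          vanishes_at_infinity (\<lambda>x. pdx (hfun v \<alpha> \<alpha>' f) t x * ln (f t x))"
    and van_hf: "\<And>t. t \<in> {0..1} \<Longrightarrow>
          vanishes_at_infinity (\<lambda>x. hfun v \<alpha> \<alpha>' f t x / f t x * pdx f t x)"
    and van_gf: "\<And>t. t \<in> {0..1} \<Longrightarrow>
          vanishes_at_infinity (\<lambda>x. (gfun v \<alpha> f t x / f t x)\<^sup>2 * pdx f t x)"
    and entropy_exists: "\<And>t. t \<in> {0..1} \<Longrightarrow> integrable lborel (\<lambda>x. f t x * ln (f t x))"
begin

abbreviation g where "g \<equiv> gfun v \<alpha> f"
abbreviation h where "h \<equiv> hfun v \<alpha> \<alpha>' f"

lemma f_partials_smooth:
  "smooth_in {0..1} F (pdx f)" "smooth_in {0..1} F (pdx (pdx f))"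
  "smooth_in {0..1} F (pdx (pdx (pdx f)))" "smooth_in {0..1} F (pdx (pdx (pdx (pdx f))))"
  by (intro smooth_in_pdx(1)[OF closed] f_smooth)+

lemmas f_deriv_x =
  smooth_in_pdx(2)[OF closed f_smooth]
  smooth_in_pdx(2)[OF closed f_partials_smooth(1)]
  smooth_in_pdx(2)[OF closed f_partials_smooth(2)]
  smooth_in_pdx(2)[OF closed f_partials_smooth(3)]

lemmas f_continuous =
  smooth_in_continuous_on[OF closed f_smooth]
  smooth_in_continuous_on[OF closed f_partials_smooth(1)]
  smooth_in_continuous_on[OF closed f_partials_smooth(2)]
  smooth_in_continuous_on[OF closed f_partials_smooth(3)]
  smooth_in_continuous_on[OF closed f_partials_smooth(4)]

lemma alpha_continuous:
  "continuous_on ({0..1} \<times> UNIV) (\<lambda>p. \<alpha> (fst p))"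
  "continuous_on ({0..1} \<times> UNIV) (\<lambda>p. \<alpha>' (fst p))"
proof -
  have "continuous_on {0..1} \<alpha>"
    using alpha_deriv by (intro DERIV_continuous_on) auto
  then show "continuous_on ({0..1} \<times> UNIV) (\<lambda>p. \<alpha> (fst p))"
    by (rule continuous_on_compose2[OF _ continuous_on_fst]) auto
  show "continuous_on ({0..1} \<times> UNIV) (\<lambda>p. \<alpha>' (fst p))"
    by (rule continuous_on_compose2[OF alpha_C1 continuous_on_fst]) auto
qed

lemma f_nonzero: "t \<in> {0..1} \<Longrightarrow> f t x \<noteq> 0"
  using pos[of t x] by simp

lemma g_deriv_x:
  assumes "t \<in> {0..1}"
  shows "((\<lambda>y. g t y) has_real_derivative v * pdx f t y + \<alpha> t * pdx (pdx f) t y) (at y)"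
  unfolding gfun_def
  by (auto intro!: derivative_eq_intros f_deriv_x[OF assms] simp: algebra_simps)

lemma pdx_g: "t \<in> {0..1} \<Longrightarrow> pdx g t x = v * pdx f t x + \<alpha> t * pdx (pdx f) t x"
  by (rule pdx_eqI, rule g_deriv_x)

lemma g_deriv_pdx: "t \<in> {0..1} \<Longrightarrow> ((\<lambda>y. g t y) has_real_derivative pdx g t y) (at y)"
  using g_deriv_x pdx_g by simp

lemma pdx_h:
  assumes "t \<in> {0..1}"
  shows "pdx h t x = v\<^sup>2 * pdx f t x + 2 * v * \<alpha> t * pdx (pdx f) t x
      + (\<alpha> t)\<^sup>2 * pdx (pdx (pdx f)) t x - \<alpha>' t * pdx f t x"
  unfolding hfun_def
  by (rule pdx_eqI) (auto intro!: derivative_eq_intros f_deriv_x[OF assms] simp: algebra_simps)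

lemma pdx_pdx_h:
  assumes "t \<in> {0..1}"
  shows "pdx (pdx h) t x = v\<^sup>2 * pdx (pdx f) t x + 2 * v * \<alpha> t * pdx (pdx (pdx f)) t x
      + (\<alpha> t)\<^sup>2 * pdx (pdx (pdx (pdx f))) t x - \<alpha>' t * pdx (pdx f) t x"
  by (rule pdx_eqI) (auto intro!: derivative_eq_intros f_deriv_x[OF assms] simp: pdx_h[OF assms] algebra_simps)

lemma f_deriv_t:
  "t \<in> {0..1} \<Longrightarrow> ((\<lambda>s. f s x) has_real_derivative
      - (v * pdx f t x + \<alpha> t * pdx (pdx f) t x)) (at t within {0..1})"
  using transport pdx_g by simp

lemma f_x_deriv_t:
  "t \<in> {0..1} \<Longrightarrow> ((\<lambda>s. pdx f s x) has_real_derivative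
      - (v * pdx (pdx f) t x + \<alpha> t * pdx (pdx (pdx f)) t x)) (at t within {0..1})"
  by (rule has_real_derivative_pdx_param[OF closed f_smooth f_deriv_t])
     (auto intro!: derivative_eq_intros f_deriv_x continuous_intros f_continuous alpha_continuous
       simp: algebra_simps)

lemma f_xx_deriv_t:
  "t \<in> {0..1} \<Longrightarrow> ((\<lambda>s. pdx (pdx f) s x) has_real_derivative
      - (v * pdx (pdx (pdx f)) t x + \<alpha> t * pdx (pdx (pdx (pdx f))) t x)) (at t within {0..1})"
  by (rule has_real_derivative_pdx_param[OF closed f_partials_smooth(1) f_x_deriv_t])
     (auto intro!: derivative_eq_intros f_deriv_x continuous_intros f_continuous alpha_continuous
       simp: algebra_simps)

(* The integrands of the domination hypotheses: H' = int A and H'' = - int B. *)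
definition A :: "real \<Rightarrow> real \<Rightarrow> real" where
  "A t x = pdx g t x * (1 + ln (f t x))"

definition B :: "real \<Rightarrow> real \<Rightarrow> real" where
  "B t x = pdx (pdx h) t x * ln (f t x) + (pdx g t x)\<^sup>2 / f t x"

definition Q :: "real \<Rightarrow> real \<Rightarrow> real" where
  "Q t x = pdx h t x * ln (f t x) - h t x / f t x * pdx f t x
      + (g t x / f t x)\<^sup>2 * pdx f t x - \<alpha>' t * pdx f t x"

definition P :: "real \<Rightarrow> real \<Rightarrow> real" where
  "P t x = 2 * (\<alpha> t)\<^sup>2 * f t x * ((pdx (pdx f) t x * f t x - (pdx f t x)\<^sup>2) / (f t x)\<^sup>2)\<^sup>2
      + \<alpha>' t * (pdx f t x)\<^sup>2 / f t x"

lemma f_ln_f_deriv_t: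
  assumes t: "t \<in> {0..1}"
  shows "((\<lambda>s. f s x * ln (f s x)) has_real_derivative - A t x) (at t within {0..1})"
proof -
  have "f t x \<noteq> 0"
    by (rule f_nonzero[OF t])
  then show ?thesis
    unfolding A_def pdx_g[OF t]
    by (auto intro!: derivative_eq_intros f_deriv_t[OF t] pos[OF t] simp: field_simps)
qed

lemma g_x_ln_f_deriv_t:
  assumes t: "t \<in> {0..1}"
  shows "((\<lambda>s. pdx g s x * ln (f s x)) has_real_derivative - B t x) (at t within {0..1})"
proof -
  have "f t x \<noteq> 0"
    by (rule f_nonzero[OF t])
  then have "((\<lambda>s. (v * pdx f s x + \<alpha> s * pdx (pdx f) s x) * ln (f s x))
      has_real_derivative - B t x) (at t within {0..1})"
    unfolding B_def pdx_g[OF t] pdx_pdx_h[OF t]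
    by (auto intro!: derivative_eq_intros f_deriv_t[OF t] f_x_deriv_t[OF t] f_xx_deriv_t[OF t]
        alpha_deriv[OF t] pos[OF t] simp: field_simps power2_eq_square)
  then show ?thesis
    by (rule has_field_derivative_transform_within[OF _ zero_less_one t]) (simp add: pdx_g)
qed

lemma Q_deriv_x:
  assumes t: "t \<in> {0..1}"
  shows "((\<lambda>y. Q t y) has_real_derivative B t y - P t y) (at y)"
proof -
  have "f t y \<noteq> 0"
    by (rule f_nonzero[OF t])
  show ?thesis
    unfolding Q_def pdx_h[OF t] hfun_def gfun_def
    by (rule derivative_eq_intros f_deriv_x[OF t] refl pos[OF t] \<open>f t y \<noteq> 0\<close>)+
       (use \<open>f t y \<noteq> 0\<close> in \<open>simp add: B_def P_def pdx_pdx_h[OF t] pdx_g[OF t]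
          field_simps power2_eq_square\<close>)
qed

lemma P_nonneg:
  assumes "t \<in> {0..1}"
  shows "0 \<le> P t x"
proof -
  have "0 \<le> \<alpha>' t"
    by (rule mono_on_Icc_deriv_nonneg[OF alpha_mono alpha_deriv[OF assms] assms]) simp
  with pos[OF assms, of x] show ?thesis
    unfolding P_def by (intro add_nonneg_nonneg mult_nonneg_nonneg divide_nonneg_pos) auto
qed

lemma A_continuous: "continuous_on ({0..1} \<times> UNIV) (\<lambda>p. A (fst p) (snd p))"
proof -
  have "continuous_on ({0..1} \<times> UNIV) (\<lambda>p. (v * pdx f (fst p) (snd p)
      + \<alpha> (fst p) * pdx (pdx f) (fst p) (snd p)) * (1 + ln (f (fst p) (snd p))))"
    by (intro continuous_intros f_continuous alpha_continuous) (auto simp: f_nonzero)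
  then show ?thesis
    by (rule continuous_on_cong[THEN iffD1, rotated 2]) (auto simp: A_def pdx_g)
qed

lemma B_continuous: "continuous_on ({0..1} \<times> UNIV) (\<lambda>p. B (fst p) (snd p))"
proof -
  have "continuous_on ({0..1} \<times> UNIV) (\<lambda>p.
      (v\<^sup>2 * pdx (pdx f) (fst p) (snd p) + 2 * v * \<alpha> (fst p) * pdx (pdx (pdx f)) (fst p) (snd p)
         + (\<alpha> (fst p))\<^sup>2 * pdx (pdx (pdx (pdx f))) (fst p) (snd p)
         - \<alpha>' (fst p) * pdx (pdx f) (fst p) (snd p)) * ln (f (fst p) (snd p))
      + (v * pdx f (fst p) (snd p) + \<alpha> (fst p) * pdx (pdx f) (fst p) (snd p))\<^sup>2 / f (fst p) (snd p))"
    by (intro continuous_intros f_continuous alpha_continuous) (auto simp: f_nonzero)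
  then show ?thesis
    by (rule continuous_on_cong[THEN iffD1, rotated 2]) (auto simp: B_def pdx_g pdx_pdx_h)
qed

lemma A_bound: "t \<in> {0..1} \<Longrightarrow> \<bar>A t x\<bar> \<le> \<theta>A x"
  unfolding A_def by (rule boundA)

lemma B_bound: "t \<in> {0..1} \<Longrightarrow> \<bar>B t x\<bar> \<le> \<theta>B x"
  unfolding B_def by (rule boundB)

definition entropy_rate :: "real \<Rightarrow> real" where
  "entropy_rate t = (LINT x|lborel. A t x)"

definition dissipation :: "real \<Rightarrow> real" where
  "dissipation t = (LINT x|lborel. B t x)"

lemma entropy_increment:
  assumes ab: "0 \<le> a" "a \<le> b" "b \<le> 1"
  shows "entropy_rate integrable_on {a..b}"
    and "entropy f b - entropy f a = integral {a..b} entropy_rate"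
proof -
  have sub: "{a..b} \<subseteq> {0..1}"
    using ab by auto
  note fubini = lborel_integral_interval_swap[OF A_continuous thA_int A_bound sub \<open>a \<le> b\<close>]
  show "entropy_rate integrable_on {a..b}"
    using fubini(1) by (simp add: entropy_rate_def[abs_def])
  have "f a x * ln (f a x) - f b x * ln (f b x) = integral {a..b} (\<lambda>s. A s x)" for x
  proof -
    have "((\<lambda>s. - A s x) has_integral (f b x * ln (f b x) - f a x * ln (f a x))) {a..b}"
      by (rule has_integral_derivative_within[OF f_ln_f_deriv_t sub \<open>a \<le> b\<close>])
    from integral_unique[OF has_integral_neg[OF this]] show ?thesis
      by simp
  qed
  moreover have "entropy f b - entropy f a
      = (LINT x|lborel. f a x * ln (f a x) - f b x * ln (f b x))"
    unfolding entropy_def using entropy_exists ab by simp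
  ultimately show "entropy f b - entropy f a = integral {a..b} entropy_rate"
    using fubini(2) by (simp add: entropy_rate_def[abs_def])
qed

lemma entropy_rate_increment:
  assumes ab: "0 \<le> a" "a \<le> b" "b \<le> 1"
  shows "entropy_rate b - entropy_rate a = - integral {a..b} dissipation"
proof -
  have sub: "{a..b} \<subseteq> {0..1}" and a: "a \<in> {0..1}" and b: "b \<in> {0..1}"
    using ab by auto
  note fubini = lborel_integral_interval_swap(2)[OF B_continuous thB_int B_bound sub \<open>a \<le> b\<close>]
    integrable_lborel_interval_integral[OF B_continuous thB_int B_bound sub \<open>a \<le> b\<close>]
  have A_int: "integrable lborel (A s)" if "s \<in> {0..1}" for s
    by (rule integrable_lborel_dominated_continuous[OF
          continuous_on_slice_snd[OF A_continuous that] thA_int A_bound[OF that]])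
  define G where "G x = pdx g b x - pdx g a x" for x
  have G_eq: "G x = (A b x - A a x) + integral {a..b} (\<lambda>s. B s x)" for x
  proof -
    have "((\<lambda>s. - B s x) has_integral
        (pdx g b x * ln (f b x) - pdx g a x * ln (f a x))) {a..b}"
      by (rule has_integral_derivative_within[OF g_x_ln_f_deriv_t sub \<open>a \<le> b\<close>])
    from integral_unique[OF has_integral_neg[OF this]] show ?thesis
      by (simp add: G_def A_def algebra_simps)
  qed
  have G_int: "integrable lborel G"
    unfolding G_eq using A_int[OF a] A_int[OF b] fubini(2) by auto
  have "(LINT x|lborel. G x) = 0"
  proof (rule integral_lborel_deriv_vanishing[OF _ G_int])
    show "((\<lambda>y. g b y - g a y) has_real_derivative G x) (at x)" for x
      unfolding G_def by (intro DERIV_diff g_deriv_pdx a b)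
    show "vanishes_at_infinity (\<lambda>y. g b y - g a y)"
      using van_g[OF a] van_g[OF b] unfolding vanishes_at_infinity_def
      by (auto intro: tendsto_diff[where a=0 and b=0, simplified])
  qed
  moreover have "entropy_rate b - entropy_rate a
      = (LINT x|lborel. G x) - (LINT x|lborel. integral {a..b} (\<lambda>s. B s x))"
    unfolding entropy_rate_def G_eq using A_int[OF a] A_int[OF b] fubini(2) by simp
  ultimately show ?thesis
    using fubini(1) by (simp add: dissipation_def[abs_def])
qed

lemma dissipation_nonneg:
  assumes t: "t \<in> {0..1}"
  shows "0 \<le> dissipation t"
proof -
  have cont: "continuous_on UNIV (pdx f t)"
    using continuous_on_slice_snd[OF f_continuous(2) t] by simp
  obtain r where r: "filterlim r at_top sequentially" "(\<lambda>n. pdx f t (r n)) \<longlonglongrightarrow> 0"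
    by (rule integrable_pos_deriv_zero_seq_at_top[OF f_deriv_x(1)[OF t] cont pos[OF t] dens_int[OF t]])
  obtain l where l: "filterlim l at_bot sequentially" "(\<lambda>n. pdx f t (l n)) \<longlonglongrightarrow> 0"
    by (rule integrable_pos_deriv_zero_seq_at_bot[OF f_deriv_x(1)[OF t] cont pos[OF t] dens_int[OF t]])
  have top: "(\<lambda>n. u (r n)) \<longlonglongrightarrow> 0" if "vanishes_at_infinity u" for u
    using that r(1) unfolding vanishes_at_infinity_def by (auto intro: filterlim_compose)
  have bot: "(\<lambda>n. u (l n)) \<longlonglongrightarrow> 0" if "vanishes_at_infinity u" for u
    using that l(1) unfolding vanishes_at_infinity_def by (auto intro: filterlim_compose)
  have "(\<lambda>n. Q t (r n) - Q t (l n)) \<longlonglongrightarrow> (0 - 0 + 0 - \<alpha>' t * 0) - (0 - 0 + 0 - \<alpha>' t * 0)"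
    unfolding Q_def by (intro tendsto_intros top bot van_h van_hf van_gf t r(2) l(2))
  then show ?thesis
    unfolding dissipation_def
    by (intro integral_lborel_nonneg_flux[OF _ Q_deriv_x[OF t] P_nonneg[OF t] l(1) r(1)])
       (simp_all add: integrable_lborel_dominated_continuous[OF
          continuous_on_slice_snd[OF B_continuous t] thB_int B_bound[OF t]])
qed

lemma entropy_concave: "concave_on {0..1} (entropy f)"
proof (rule concave_on_Icc_integral_antimono[where D = entropy_rate])
  fix a b :: real
  assume ab: "0 \<le> a" "a \<le> b" "b \<le> 1"
  then show "entropy_rate integrable_on {a..b} \<and> entropy f b - entropy f a = integral {a..b} entropy_rate"
    using entropy_increment by blast
  have "dissipation integrable_on {a..b}"
    using lborel_integral_interval_swap(1)[OF B_continuous thB_int B_bound] ab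
    by (simp add: dissipation_def[abs_def])
  then have "0 \<le> integral {a..b} dissipation"
    using ab by (intro integral_nonneg dissipation_nonneg) auto
  then show "entropy_rate b \<le> entropy_rate a"
    using entropy_rate_increment[OF ab] by simp
qed

end

theorem theorem2p6:
  fixes f :: "real \<Rightarrow> real \<Rightarrow> real" and v :: real
    and \<alpha> \<alpha>' :: "real \<Rightarrow> real" and \<theta>A \<theta>B :: "real \<Rightarrow> real"
  assumes smooth: "smooth2_on ({0..1} \<times> UNIV) f"
    and pos: "\<And>t x. t \<in> {0..1} \<Longrightarrow> f t x > 0"
    and dens_int: "\<And>t. t \<in> {0..1} \<Longrightarrow> integrable lborel (\<lambda>x. f t x)"
    and dens_one: "\<And>t. t \<in> {0..1} \<Longrightarrow> (LINT x|lborel. f t x) = 1"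
    and alpha_mono: "mono_on {0..1} \<alpha>"
    and alpha_deriv: "\<And>t. t \<in> {0..1} \<Longrightarrow> (\<alpha> has_real_derivative \<alpha>' t) (at t within {0..1})"
    and alpha_C1: "continuous_on {0..1} \<alpha>'"
    and transport: "\<And>t x. t \<in> {0..1} \<Longrightarrow>
          ((\<lambda>s. f s x) has_real_derivative - pdx (gfun v \<alpha> f) t x) (at t within {0..1})"
    and thA_int: "integrable lborel \<theta>A"
    and thB_int: "integrable lborel \<theta>B"
    and boundA: "\<And>t x. t \<in> {0..1} \<Longrightarrow>
          \<bar>pdx (gfun v \<alpha> f) t x * (1 + ln (f t x))\<bar> \<le> \<theta>A x"
    and boundB: "\<And>t x. t \<in> {0..1} \<Longrightarrow>
          \<bar>pdx (pdx (hfun v \<alpha> \<alpha>' f)) t x * ln (f t x)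
             + (pdx (gfun v \<alpha> f) t x)\<^sup>2 / f t x\<bar> \<le> \<theta>B x"
    and van_g: "\<And>t. t \<in> {0..1} \<Longrightarrow> vanishes_at_infinity (\<lambda>x. gfun v \<alpha> f t x)"
    and van_h: "\<And>t. t \<in> {0..1} \<Longrightarrow>
          vanishes_at_infinity (\<lambda>x. pdx (hfun v \<alpha> \<alpha>' f) t x * ln (f t x))"
    and van_hf: "\<And>t. t \<in> {0..1} \<Longrightarrow>
          vanishes_at_infinity (\<lambda>x. hfun v \<alpha> \<alpha>' f t x / f t x * pdx f t x)"
    and van_gf: "\<And>t. t \<in> {0..1} \<Longrightarrow>
          vanishes_at_infinity (\<lambda>x. (gfun v \<alpha> f t x / f t x)\<^sup>2 * pdx f t x)"
    and entropy_exists: "\<And>t. t \<in> {0..1} \<Longrightarrow> integrable lborel (\<lambda>x. f t x * ln (f t x))"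
  shows "concave_on {0..1} (entropy f)"
proof -
  obtain F where "partials_closed {0..1} F" "smooth_in {0..1} F f"
    using smooth by (rule smooth2_onE)
  then interpret entropy_flow F f v \<alpha> \<alpha>' \<theta>A \<theta>B
    using assms by unfold_locales auto
  show ?thesis
    by (rule entropy_concave)
qed

end
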